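(* Let $n$ be a positive integer. (a) For every positive integer $c$ with $c\leq \max_{k\in\mathbb{Z}_{>0}}\bigl(2^k n-(k+2^k-2)2^k-1\bigr)$, there is an arithmetical structure $(r_1,\dots,r_n)$ on $K_n$ with $r_1=c$. (b) For every prime number $p$ with $p\leq \max_{k\in\mathbb{Z}_{>0}}\bigl(2^k n-(k+2^k-3)2^k-3\bigr)$, there is an arithmetical structure $(r_1,\dots,r_n)$ on $K_n$ with $r_1=p$.
   Context: An arithmetical structure on the complete graph $K_n$ is an $n$-tuple $(r_1,r_2,\dots,r_n)$ of positive integers with $\gcd(r_1,\dots,r_n)=1$ such that $r_j$ divides $\sum_{i=1}^n r_i$ for every $j$. The entries are always listed so that $r_1\geq r_2\geq\dots\geq r_n$; thus $r_1$ is the largest value of the structure. *)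

theory Defs
  imports "HOL-Computational_Algebra.Primes"
begin

text \<open>An arithmetical structure on the complete graph K_n, written as the list
  [r_1, ..., r_n] with r_1 \<ge> r_2 \<ge> ... \<ge> r_n (so r_1 = r ! 0 is the largest value).\<close>
definition arith_structure_K :: "nat \<Rightarrow> nat list \<Rightarrow> bool" where
  "arith_structure_K n r \<longleftrightarrow>
     length r = n \<and> (\<forall>x\<in>set r. 0 < x) \<and> sorted_wrt (\<lambda>a b. a \<ge> b) r \<and>
     Gcd (set r) = 1 \<and> (\<forall>x\<in>set r. x dvd sum_list r)"

end

theory Submission
  imports Defs
begin

text \<open>
  Fix \<open>k \<ge> 1\<close> and put \<open>m = n + 1 - 2^k\<close>. If \<open>c\<close> is a sum of \<open>m\<close> divisors of \<open>2^k\<close>, then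
  \<open>c\<close> repeated \<open>2^k - 1\<close> times followed by these divisors has sum \<open>2^k c\<close>, which every entry
  divides; the tuple is primitive as soon as \<open>c\<close> is odd or one of the divisors is \<open>1\<close>.
  A number \<open>x \<ge> m\<close> is a sum of \<open>m\<close> divisors of \<open>2^k\<close> whenever \<open>x + 3 \<le> (m + 2 - k) 2^k\<close>:
  going from \<open>k\<close> to \<open>k + 1\<close>, either the bound already holds for \<open>k\<close>, or \<open>x\<close> is one of the
  extreme values \<open>m\<close>, \<open>m 2^k\<close>, or a part \<open>2^(k+1)\<close> can be split off and the bound survives
  for \<open>m - 1\<close> parts. In (a), if the bound of the theorem is attained then \<open>c + 1\<close> is a multiple
  of \<open>2^k\<close>, so \<open>c\<close> is odd and has room to spare; otherwise \<open>c - 1\<close> is split into \<open>m - 1\<close> parts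
  and a part \<open>1\<close> is added. In (b) the prime is odd, since \<open>p = 2\<close> does not fit the bound.
  Values \<open>c < n\<close> come from the structure \<open>(c, \<dots>, c, 1, \<dots>, 1)\<close>.
\<close>

lemma add_2_le_two_power: "2 \<le> k \<Longrightarrow> k + 2 \<le> (2::nat) ^ k"
proof (induction k rule: dec_induct)
  case (step k)
  then show ?case by (cases "k = 2") auto
qed simp

definition dvd_pow2_partition :: "nat \<Rightarrow> nat \<Rightarrow> nat \<Rightarrow> bool" where
  "dvd_pow2_partition k m x \<longleftrightarrow>
     (\<exists>L. length L = m \<and> sum_list L = x \<and> (\<forall>y\<in>set L. y dvd 2 ^ k))"

lemma dvd_pow2_partition_Suc:
  "dvd_pow2_partition k m x \<Longrightarrow> dvd_pow2_partition (Suc k) m x"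
  unfolding dvd_pow2_partition_def by (fastforce intro: dvd_mult_right)

lemma dvd_pow2_partition_replicate:
  "d dvd 2 ^ k \<Longrightarrow> dvd_pow2_partition k m (m * d)"
  unfolding dvd_pow2_partition_def
  by (intro exI[of _ "replicate m d"]) (simp add: sum_list_replicate)

lemma dvd_pow2_partition_Cons:
  "d dvd 2 ^ k \<Longrightarrow> dvd_pow2_partition k m x \<Longrightarrow> dvd_pow2_partition k (Suc m) (d + x)"
  unfolding dvd_pow2_partition_def by (metis length_Cons set_ConsD sum_list.Cons)

lemma dvd_pow2_partition_peel_bounds:
  fixes k m x :: nat
  assumes "m \<le> x" "x \<noteq> m" "x \<noteq> m * 2 ^ k"
    and above: "(m + 2 - k) * 2 ^ k < x + 3"
    and below: "x + 3 \<le> (m + 2 - Suc k) * 2 ^ Suc k"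
  shows "2 \<le> m" "2 ^ Suc k \<le> x" "m - 1 \<le> x - 2 ^ Suc k"
    "x - 2 ^ Suc k + 3 \<le> (m - 1 + 2 - Suc k) * 2 ^ Suc k"
proof -
  define P :: nat where "P = 2 ^ k"
  have "k < m"
  proof (rule ccontr)
    assume "\<not> k < m"
    then consider "m < k" | "m = k" by linarith
    then show False
      using above below by cases simp_all
  qed
  then obtain i where m: "m = Suc (k + i)"
    using less_imp_Suc_add by blast
  have "i \<le> i * P" by (simp add: P_def)
  have above': "i * P + 3 * P < x + 3" using above by (simp add: m P_def algebra_simps)
  have below': "x + 3 \<le> 2 * (i * P) + 4 * P" using below by (simp add: m P_def algebra_simps)
  have peeled: "k + i + 2 * P \<le> x"
  proof -
    consider "k = 0" | "k = 1" | "2 \<le> k" by linarith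
    then show ?thesis
    proof cases
      case 1
      then show ?thesis using above' \<open>x \<noteq> m\<close> by (simp add: m P_def)
    next
      case 2
      then show ?thesis using above' \<open>x \<noteq> m * 2 ^ k\<close> by (simp add: m P_def)
    next
      case 3
      then show ?thesis
        using above' add_2_le_two_power[OF 3] \<open>i \<le> i * P\<close> unfolding P_def by linarith
    qed
  qed
  have "2 ^ Suc k = 2 * P"
    by (simp add: P_def)
  with peeled show "2 ^ Suc k \<le> x" "m - 1 \<le> x - 2 ^ Suc k"
    by (simp_all add: m)
  have rhs: "(m - 1 + 2 - Suc k) * (2 * P) = 2 * (i * P) + 2 * P"
    by (simp add: m algebra_simps)
  show "x - 2 ^ Suc k + 3 \<le> (m - 1 + 2 - Suc k) * 2 ^ Suc k"
    unfolding \<open>2 ^ Suc k = 2 * P\<close> rhs using peeled below' by linarith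
  show "2 \<le> m"
  proof (rule ccontr)
    assume "\<not> 2 \<le> m"
    then have "k = 0" "i = 0"
      using m by linarith+
    then show False
      using peeled below' by (simp add: P_def)
  qed
qed

lemma dvd_pow2_partition_exists:
  "1 \<le> m \<Longrightarrow> m \<le> x \<Longrightarrow> x + 3 \<le> (m + 2 - k) * 2 ^ k \<Longrightarrow> dvd_pow2_partition k m x"
proof (induction k arbitrary: m x)
  case 0
  then show ?case by simp
next
  case (Suc k)
  show ?case
    using Suc.prems
  proof (induction m arbitrary: x rule: less_induct)
    case (less m)
    consider "x + 3 \<le> (m + 2 - k) * 2 ^ k" | "x = m" | "x = m * 2 ^ k"
      | "x \<noteq> m" "x \<noteq> m * 2 ^ k" "(m + 2 - k) * 2 ^ k < x + 3"
      using not_le by blast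
    then show ?case
    proof cases
      case 1
      then show ?thesis using less.prems(1,2) by (intro dvd_pow2_partition_Suc Suc.IH)
    next
      case 2
      then show ?thesis using dvd_pow2_partition_replicate[of 1 "Suc k" m] by simp
    next
      case 3
      then show ?thesis using dvd_pow2_partition_replicate[of "2 ^ k" "Suc k" m] by simp
    next
      case 4
      note peel = dvd_pow2_partition_peel_bounds[OF less.prems(2) 4 less.prems(3)]
      have "dvd_pow2_partition (Suc k) (m - 1) (x - 2 ^ Suc k)"
        by (rule less.IH[OF _ _ _ peel(4)]) (use peel(1,3) in simp_all)
      then have "dvd_pow2_partition (Suc k) (Suc (m - 1)) (2 ^ Suc k + (x - 2 ^ Suc k))"
        by (rule dvd_pow2_partition_Cons[rotated]) simp
      moreover have "Suc (m - 1) = m" "2 ^ Suc k + (x - 2 ^ Suc k) = x"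
        using peel(1,2) by simp_all
      ultimately show ?thesis
        by simp
    qed
  qed
qed

lemma dvd_pow2_partition_complement:
  assumes "2 ^ k \<le> n" "n \<le> c" "c + 3 \<le> 2 ^ k * (n + 3 - (k + 2 ^ k))"
  shows "dvd_pow2_partition k (n + 1 - 2 ^ k) c"
proof (rule dvd_pow2_partition_exists)
  show "1 \<le> n + 1 - 2 ^ k" "n + 1 - 2 ^ k \<le> c"
    using assms(1,2) less_exp[of k] by linarith+
  have "n + 1 - 2 ^ k + 2 - k = n + 3 - (k + 2 ^ k)"
    using assms(1) by linarith
  then show "c + 3 \<le> (n + 1 - 2 ^ k + 2 - k) * 2 ^ k"
    using assms(3) by (simp only: mult.commute)
qed

lemma dvd_pow2_partition_complement_pred:
  assumes "2 ^ k < n" "n \<le> c" "c + 2 \<le> 2 ^ k * (n + 2 - (k + 2 ^ k))"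
  shows "dvd_pow2_partition k (n - 2 ^ k) (c - 1)"
proof (rule dvd_pow2_partition_exists)
  show "1 \<le> n - 2 ^ k" "n - 2 ^ k \<le> c - 1"
    using assms(1,2) less_exp[of k] by linarith+
  have "n - 2 ^ k + 2 - k = n + 2 - (k + 2 ^ k)"
    using assms(1) by linarith
  then show "c - 1 + 3 \<le> (n - 2 ^ k + 2 - k) * 2 ^ k"
    using assms by (simp add: mult.commute)
qed

lemma sorted_wrt_replicate: "R x x \<Longrightarrow> sorted_wrt R (replicate n x)"
  by (induction n) auto

lemma arith_structure_K_with_small_max:
  assumes "0 < c" "c < n"
  shows "\<exists>r. arith_structure_K n r \<and> r ! 0 = c"
proof -
  define r where "r = replicate (n - c) c @ replicate c (1::nat)"
  have "sum_list r = (n - c + 1) * c"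
    by (simp add: r_def sum_list_replicate)
  moreover have "1 \<in> set r"
    using assms by (simp add: r_def)
  ultimately have "arith_structure_K n r"
    using assms Gcd_dvd_nat[of 1 "set r"]
    by (auto simp: arith_structure_K_def r_def sorted_wrt_append intro: sorted_wrt_replicate)
  moreover have "r ! 0 = c"
    using assms by (simp add: r_def nth_append)
  ultimately show ?thesis by blast
qed

lemma arith_structure_K_of_dvd_pow2_list:
  assumes "0 < k" "length L + 2 ^ k = n + 1" "\<forall>y\<in>set L. y dvd 2 ^ k" "sum_list L = c"
    and "Gcd (insert c (set L)) = 1"
  shows "\<exists>r. arith_structure_K n r \<and> r ! 0 = c"
proof -
  define r where "r = replicate (2 ^ k - 1) c @ rev (sort L)"
  have "2 \<le> (2::nat) ^ k"
    using assms(1) by (cases k) auto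
  then have set_r: "set r = insert c (set L)" and head_r: "r ! 0 = c"
    by (auto simp: r_def nth_append)
  have sum_r: "sum_list r = 2 ^ k * c"
    using \<open>2 \<le> 2 ^ k\<close> assms(4)
    by (simp add: r_def sum_list_replicate sum_list_rev flip: sum_mset_sum_list mset_sort)
       (simp add: algebra_simps)
  have "\<forall>y\<in>set L. 0 < y \<and> y \<le> c"
    using assms(3,4) member_le_sum_list by (fastforce intro: gr0I)
  moreover have "0 < c"
    using calculation assms(4,5) by (cases L) auto
  ultimately have "arith_structure_K n r"
    using assms set_r sum_r
    by (auto simp: arith_structure_K_def r_def sorted_wrt_append sorted_wrt_rev
        intro: sorted_wrt_replicate dvd_mult2)
  then show ?thesis
    using head_r by blast
qed

lemma Gcd_insert_odd_dvd_pow2: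
  assumes "odd c" "y \<in> Y" "y dvd 2 ^ k"
  shows "Gcd (insert c Y) = (1::nat)"
proof -
  have "Gcd (insert c Y) dvd c" "Gcd (insert c Y) dvd 2 ^ k"
    using assms Gcd_dvd_nat[of y "insert c Y"] by (auto intro: dvd_trans)
  moreover have "coprime c (2 ^ k)"
    using assms(1) by simp
  ultimately show ?thesis
    using coprime_common_divisor_nat by blast
qed

lemma arith_structure_K_of_odd_partition:
  assumes "0 < k" "odd c" "2 ^ k \<le> n" "dvd_pow2_partition k (n + 1 - 2 ^ k) c"
  shows "\<exists>r. arith_structure_K n r \<and> r ! 0 = c"
proof -
  obtain L where L: "length L = n + 1 - 2 ^ k" "sum_list L = c" "\<forall>y\<in>set L. y dvd 2 ^ k"
    using assms(4) unfolding dvd_pow2_partition_def by blast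
  have "length L + 2 ^ k = n + 1"
    using L(1) assms(3) by linarith
  moreover obtain y where "y \<in> set L"
    using L(1) assms(3) by (cases L) auto
  then have "Gcd (insert c (set L)) = 1"
    using L(3) by (intro Gcd_insert_odd_dvd_pow2[OF assms(2)]) auto
  ultimately show ?thesis
    by (rule arith_structure_K_of_dvd_pow2_list[OF assms(1) _ L(3) L(2)])
qed

lemma arith_structure_K_of_partition_plus_one:
  assumes "0 < k" "2 ^ k < n" "0 < c" "dvd_pow2_partition k (n - 2 ^ k) (c - 1)"
  shows "\<exists>r. arith_structure_K n r \<and> r ! 0 = c"
proof -
  obtain L where L: "length L = n - 2 ^ k" "sum_list L = c - 1" "\<forall>y\<in>set L. y dvd 2 ^ k"
    using assms(4) unfolding dvd_pow2_partition_def by blast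
  have "length (1 # L) + 2 ^ k = n + 1"
    using L(1) assms(2) by simp
  moreover have "\<forall>y\<in>set (1 # L). y dvd 2 ^ k"
    using L(3) by simp
  moreover have "sum_list (1 # L) = c"
    using L(2) assms(3) by simp
  moreover have "Gcd (insert c (set (1 # L))) = 1"
    using Gcd_dvd_nat[of 1 "insert c (set (1 # L))"] by simp
  ultimately show ?thesis
    by (rule arith_structure_K_of_dvd_pow2_list[OF assms(1)])
qed

lemma arith_structure_K_of_bound_plus_one:
  assumes "0 < k" "0 < c" "n \<le> c" "c + 2 \<le> 2 ^ k * (n + 2 - (k + 2 ^ k))"
  shows "\<exists>r. arith_structure_K n r \<and> r ! 0 = c"
proof -
  have "2 ^ k < n"
  proof (rule ccontr)
    assume "\<not> 2 ^ k < n"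
    then have "n + 2 - (k + 2 ^ k) \<le> 1"
      using assms(1) by linarith
    then have "c + 2 \<le> 2 ^ k"
      using assms(4) by (metis mult.right_neutral mult_le_mono2 order_trans)
    moreover have "n + 2 - (k + 2 ^ k) \<noteq> 0"
      using assms(4) by auto
    ultimately show False
      using assms(3) by linarith
  qed
  moreover have "dvd_pow2_partition k (n - 2 ^ k) (c - 1)"
    using calculation assms(3,4) by (rule dvd_pow2_partition_complement_pred)
  ultimately show ?thesis
    using assms(1,2) by (intro arith_structure_K_of_partition_plus_one)
qed

lemma nat_le_mult_diff_of_int:
  fixes a b d P :: nat
  assumes "int a \<le> int P * (int b - int d)" "0 < a"
  shows "d < b" "a \<le> P * (b - d)"
proof -
  show "d < b"
    using assms mult_nonneg_nonpos[of "int P" "int b - int d"] by (cases "d < b") auto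
  then have "int (P * (b - d)) = int P * (int b - int d)"
    by (simp add: of_nat_diff)
  then show "a \<le> P * (b - d)"
    using assms(1) by linarith
qed

lemma odd_prime_of_bound:
  assumes "prime p" "0 < k" "2 ^ k \<le> n" "n \<le> p" "p + 3 \<le> 2 ^ k * (n + 3 - (k + 2 ^ k))"
  shows "odd p"
proof
  assume "even p"
  then have "\<not> 2 < p"
    using prime_odd_nat[OF assms(1)] by blast
  then have "p = 2"
    using prime_ge_2_nat[OF assms(1)] by linarith
  have "\<not> 2 \<le> k"
  proof
    assume "2 \<le> k"
    then have "(2::nat) ^ 2 \<le> 2 ^ k"
      by (rule power_increasing) simp
    then show False
      using assms(3,4) \<open>p = 2\<close> by simp
  qed
  then have "k = 1"
    using assms(2) by simp
  then show False
    using assms(4,5) \<open>p = 2\<close> by simp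
qed

lemma arith_structure_K_with_max_of_bound:
  assumes "0 < c" "0 < k" "int c \<le> 2 ^ k * int n - (int k + 2 ^ k - 2) * 2 ^ k - 1"
  shows "\<exists>r. arith_structure_K n r \<and> r ! 0 = c"
proof (cases "c < n")
  case True
  then show ?thesis using assms(1) arith_structure_K_with_small_max by blast
next
  case False
  have "int (c + 1) \<le> int (2 ^ k) * (int (n + 2) - int (k + 2 ^ k))"
    using assms(3) by (simp add: algebra_simps)
  from nat_le_mult_diff_of_int[OF this]
  have bound: "k + 2 ^ k < n + 2" "c + 1 \<le> 2 ^ k * (n + 2 - (k + 2 ^ k))"
    by simp_all
  show ?thesis
  proof (cases "c + 1 = 2 ^ k * (n + 2 - (k + 2 ^ k))")
    case True
    then have "even (c + 1)"
      using assms(2) by simp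
    then have "odd c"
      by simp
    have "n + 3 - (k + 2 ^ k) = Suc (n + 2 - (k + 2 ^ k))"
      using bound(1) by linarith
    moreover have "2 \<le> (2::nat) ^ k"
      using assms(2) by (cases k) auto
    ultimately have "c + 3 \<le> 2 ^ k * (n + 3 - (k + 2 ^ k))"
      using True by simp
    moreover have "2 ^ k \<le> n"
      using assms(2) bound(1) by linarith
    ultimately show ?thesis
      using assms(2) \<open>odd c\<close> False
      by (intro arith_structure_K_of_odd_partition dvd_pow2_partition_complement) auto
  next
    case False
    with bound(2) have "c + 2 \<le> 2 ^ k * (n + 2 - (k + 2 ^ k))"
      by simp
    then show ?thesis
      using assms(1,2) \<open>\<not> c < n\<close> by (intro arith_structure_K_of_bound_plus_one) auto
  qed
qed

lemma arith_structure_K_with_prime_max_of_bound: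
  assumes "prime p" "0 < k" "int p \<le> 2 ^ k * int n - (int k + 2 ^ k - 3) * 2 ^ k - 3"
  shows "\<exists>r. arith_structure_K n r \<and> r ! 0 = p"
proof (cases "p < n")
  case True
  then show ?thesis using prime_gt_0_nat[OF assms(1)] arith_structure_K_with_small_max by blast
next
  case False
  have "int (p + 3) \<le> int (2 ^ k) * (int (n + 3) - int (k + 2 ^ k))"
    using assms(3) by (simp add: algebra_simps)
  from nat_le_mult_diff_of_int[OF this]
  have bound: "k + 2 ^ k < n + 3" "p + 3 \<le> 2 ^ k * (n + 3 - (k + 2 ^ k))"
    by simp_all
  have "2 ^ k \<le> n"
  proof (rule ccontr)
    assume "\<not> 2 ^ k \<le> n"
    then have "n + 3 - (k + 2 ^ k) = 1"
      using bound(1) assms(2) by linarith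
    then show False
      using bound False by simp
  qed
  moreover have "odd p"
    using assms(1,2) \<open>2 ^ k \<le> n\<close> False bound(2) by (intro odd_prime_of_bound) auto
  ultimately show ?thesis
    using assms(2) bound(2) False
    by (intro arith_structure_K_of_odd_partition dvd_pow2_partition_complement) auto
qed

theorem theorem2p1:
  fixes n :: nat
  assumes "0 < n"
  shows "(\<forall>c::nat. 0 < c \<and>
            (\<exists>k::nat. 0 < k \<and> int c \<le> 2^k * int n - (int k + 2^k - 2) * 2^k - 1)
            \<longrightarrow> (\<exists>r. arith_structure_K n r \<and> r ! 0 = c))
       \<and> (\<forall>p::nat. prime p \<and>
            (\<exists>k::nat. 0 < k \<and> int p \<le> 2^k * int n - (int k + 2^k - 3) * 2^k - 3)
            \<longrightarrow> (\<exists>r. arith_structure_K n r \<and> r ! 0 = p))"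
  using arith_structure_K_with_max_of_bound arith_structure_K_with_prime_max_of_bound by blast

end
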